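(* Let $m\ge 2$ be an integer, let $\lambda_1,\dots,\lambda_m>0$, and let $X_1,\dots,X_m$ be independent random variables with $X_i\sim\mathrm{Pois}(\lambda_i)$. For $n\ge1$ define $p_n^{(m)}=\mathbb{P}(X_1\cdots X_m\ge n)$. Then, as $n\to\infty$, \[ p_n^{(m)}=(2\pi)^{(m-1)/2}\,n^{(m-1)/(2m)}\exp\bigl(-n^{1/m}\log n+O(n^{1/m})\bigr), \] and in particular $\log p_n^{(m)}=-n^{1/m}\log n+O(n^{1/m})$.
   Context: $\log$ denotes the natural logarithm. $\mathrm{Pois}(\lambda)$ is the Poisson distribution with mean $\lambda$. *)

theory Defs
  imports "HOL-Probability.Probability" "HOL-Library.Landau_Symbols"
begin

text \<open>Joint law of independent X_0,...,X_(m-1) with X_i ~ Pois(lam i), as a product pmf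
  on functions nat => nat (value 0 outside {..<m}).  p_n^(m) = P(X_1 ... X_m >= n).\<close>
definition pois_prod_tail :: "nat \<Rightarrow> (nat \<Rightarrow> real) \<Rightarrow> nat \<Rightarrow> real" where
  "pois_prod_tail m lam n =
     measure_pmf.prob (Pi_pmf {..<m} 0 (\<lambda>i. poisson_pmf (lam i)))
       {x. (\<Prod>i<m. x i) \<ge> n}"

end

theory Submission
  imports Defs "HOL-Real_Asymp.Real_Asymp"
begin

(* Write N = n powr (1/m), so that N ln n = m N ln N, and let k = ceiling N.

  Lower bound: the event contains the point X_1 = ... = X_m = k, and
  Pois(lambda){k} >= (lambda/k)^k e^(-lambda) makes its probability exp(-m k ln k + O(N)),
  while k ln k <= N ln N + 2N by convexity of x ln x.

  Upper bound: exponential Markov inequality with weight prod_i exp(X_i ln X_i - a X_i).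
  Since k^k/k! <= e^k, each factor has Poisson expectation bounded by a geometric series
  once a >= ln lambda_i + 2. On the event, t |-> e^t (t - a) lies above its tangent at
  t = ln N (for ln N >= a - 1) and the tangent has nonnegative slope, so sum ln X_i >= m ln N
  forces sum (X_i ln X_i - a X_i) >= N ln n - a m N.

  The prefactor (2 pi)^((m-1)/2) n^((m-1)/(2m)) is exp(O(ln n)) and is absorbed in the
  error term. *)

lemma power_div_fact_le_exp:
  fixes x :: real
  assumes "0 \<le> x"
  shows "x ^ k / fact k \<le> exp x"
proof -
  have series: "(\<lambda>n. x ^ n / fact n) sums exp x"
    using exp_converges[of x] by (simp add: divide_inverse mult.commute scaleR_conv_of_real)
  have "(\<Sum>n\<in>{k}. x ^ n / fact n) \<le> (\<Sum>n. x ^ n / fact n)"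
    using series assms by (intro sum_le_suminf) (auto simp: sums_iff)
  with series show ?thesis
    by (simp add: sums_iff)
qed

lemma mult_ln_tangent_le:
  fixes x y :: real
  assumes "0 < x" "0 < y"
  shows "x * ln x \<le> y * ln y + (ln x + 1) * (x - y)"
proof -
  have "y * ln (x / y) \<le> y * (x / y - 1)"
    using assms by (intro mult_left_mono ln_le_minus_one) auto
  then have "y * (ln x - ln y) \<le> x - y"
    using assms by (simp add: ln_div algebra_simps)
  then show ?thesis
    by (simp add: algebra_simps)
qed

lemma mult_ln_ge_tangent_ln:
  fixes x N a :: real
  assumes "0 < x" "0 < N" "a - 1 \<le> ln N"
  shows "N * ln N - a * N + N * (ln N - a + 1) * (ln x - ln N) \<le> x * ln x - a * x"
proof -
  define r where "r = x / N"
  have r: "0 < r" "x = N * r" "ln x = ln N + ln r"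
    using assms by (auto simp: r_def ln_div)
  have "0 \<le> r - 1 - ln r"
    using ln_le_minus_one[OF \<open>0 < r\<close>] by simp
  then have first: "0 \<le> N * (ln N - a + 1) * (r - 1 - ln r)"
    using assms by simp
  have "r * (- ln r) \<le> r * (1 / r - 1)"
    using ln_le_minus_one[of "1 / r"] r by (intro mult_left_mono) (auto simp: ln_div)
  then have "0 \<le> r * ln r - r + 1"
    using r by (simp add: algebra_simps)
  then have second: "0 \<le> N * (r * ln r - r + 1)"
    using assms by simp
  have "x * ln x - a * x - (N * ln N - a * N + N * (ln N - a + 1) * (ln x - ln N))
      = N * (ln N - a + 1) * (r - 1 - ln r) + N * (r * ln r - r + 1)"
    by (simp only: r(3)) (simp add: r(2) algebra_simps)
  with first second show ?thesis
    by linarith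
qed

lemma sum_mult_ln_ge_of_sum_ln_ge:
  fixes y :: "'i \<Rightarrow> real" and N a :: real
  assumes "finite I" "\<And>i. i \<in> I \<Longrightarrow> 0 < y i" "0 < N" "a - 1 \<le> ln N"
    and "real (card I) * ln N \<le> (\<Sum>i\<in>I. ln (y i))"
  shows "real (card I) * (N * ln N - a * N) \<le> (\<Sum>i\<in>I. y i * ln (y i) - a * y i)"
proof -
  define B where "B = N * (ln N - a + 1)"
  have "0 \<le> B"
    using assms by (simp add: B_def)
  then have "real (card I) * (N * ln N - a * N)
      \<le> real (card I) * (N * ln N - a * N) + B * ((\<Sum>i\<in>I. ln (y i)) - real (card I) * ln N)"
    using assms(5) by simp
  also have "\<dots> = (\<Sum>i\<in>I. N * ln N - a * N + B * (ln (y i) - ln N))"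
    by (simp add: sum.distrib sum_subtractf sum_distrib_left algebra_simps)
  also have "\<dots> \<le> (\<Sum>i\<in>I. y i * ln (y i) - a * y i)"
    using mult_ln_ge_tangent_ln assms unfolding B_def by (intro sum_mono) auto
  finally show ?thesis .
qed

lemma ceiling_mult_ln_le:
  fixes N :: real
  assumes "1 \<le> N"
  shows "real (nat \<lceil>N\<rceil>) * ln (nat \<lceil>N\<rceil>) \<le> N * ln N + 2 * N"
proof -
  define k where "k = real (nat \<lceil>N\<rceil>)"
  have k: "N \<le> k" "k \<le> N + 1"
    using assms unfolding k_def by linarith+
  have "k * ln k \<le> N * ln N + (ln k + 1) * (k - N)"
    using assms k by (intro mult_ln_tangent_le) auto
  also have "\<dots> \<le> N * ln N + (ln k + 1)"
    using assms k mult_left_mono[of "k - N" 1 "ln k + 1"] by simp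
  also have "\<dots> \<le> N * ln N + 2 * N"
  proof -
    have "ln k \<le> k - 1"
      using assms k by (intro ln_le_minus_one) linarith
    then show ?thesis
      using assms k by linarith
  qed
  finally show ?thesis
    unfolding k_def .
qed

lemma ln_poisson_pmf_ge:
  fixes lam :: real
  assumes "0 < lam"
  shows "k * ln lam - k * ln k - lam \<le> ln (pmf (poisson_pmf lam) k)"
proof -
  have "ln (fact k :: real) \<le> k * ln k"
  proof (cases "k = 0")
    case False
    have "(fact k :: real) \<le> real k ^ k"
      using fact_le_power[of k] by (simp flip: of_nat_power)
    then show ?thesis
      using False by (simp flip: ln_realpow)
  qed simp
  then show ?thesis
    using assms by (simp add: pmf_poisson ln_mult ln_div ln_realpow)
qed

lemma poisson_pmf_mult_exp_mult_ln_le: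
  fixes lam a :: real
  assumes "0 < lam"
  shows "pmf (poisson_pmf lam) k * exp (k * ln k - a * k) \<le> (lam * exp (1 - a)) ^ k"
proof -
  have "exp (k * ln k) = real k ^ k"
    by (cases "k = 0") (simp_all add: exp_of_nat_mult)
  moreover have powers: "exp (a * k) = exp a ^ k" "exp k = exp 1 ^ k"
    by (simp_all flip: exp_of_nat_mult add: mult.commute)
  ultimately have "pmf (poisson_pmf lam) k * exp (k * ln k - a * k)
      = exp (- lam) * (real k ^ k / fact k) * (lam * exp (- a)) ^ k"
    using assms by (simp add: pmf_poisson exp_diff exp_minus exp_of_nat_mult power_mult_distrib field_simps)
  also have "\<dots> \<le> 1 * exp k * (lam * exp (- a)) ^ k"
    using assms by (intro mult_mono power_div_fact_le_exp) auto
  also have "\<dots> = (lam * exp (1 - a)) ^ k"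
    using powers by (simp add: exp_diff exp_minus power_mult_distrib field_simps)
  finally show ?thesis .
qed

lemma nn_integral_poisson_exp_mult_ln_le:
  fixes lam a q :: real
  assumes "0 < lam" "lam * exp (1 - a) \<le> q" "q < 1"
  shows "(\<integral>\<^sup>+k. ennreal (exp (k * ln k - a * k)) \<partial>measure_pmf (poisson_pmf lam))
           \<le> ennreal (1 / (1 - q))"
proof -
  have "0 < lam * exp (1 - a)"
    using assms(1) by simp
  then have "0 \<le> q"
    using assms(2) by linarith
  have "(\<integral>\<^sup>+k. ennreal (exp (k * ln k - a * k)) \<partial>measure_pmf (poisson_pmf lam))
      = (\<integral>\<^sup>+k. ennreal (pmf (poisson_pmf lam) k) * ennreal (exp (k * ln k - a * k)) \<partial>count_space UNIV)"
    by (rule nn_integral_measure_pmf)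
  also have "\<dots> \<le> (\<integral>\<^sup>+k. ennreal (q ^ k) \<partial>count_space UNIV)"
  proof (intro nn_integral_mono)
    fix k :: nat
    have "(lam * exp (1 - a)) ^ k \<le> q ^ k"
      using \<open>0 < lam * exp (1 - a)\<close> assms(2) by (intro power_mono) auto
    with poisson_pmf_mult_exp_mult_ln_le[OF assms(1)]
    have "pmf (poisson_pmf lam) k * exp (k * ln k - a * k) \<le> q ^ k"
      by (rule order.trans)
    then show "ennreal (pmf (poisson_pmf lam) k) * ennreal (exp (k * ln k - a * k)) \<le> ennreal (q ^ k)"
      by (simp add: ennreal_mult[symmetric] ennreal_leI)
  qed
  also have "\<dots> = ennreal (\<Sum>k. q ^ k)"
    using \<open>0 \<le> q\<close> \<open>q < 1\<close>
    by (simp add: nn_integral_count_space_nat suminf_ennreal2 summable_geometric)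
  also have "(\<Sum>k. q ^ k) = 1 / (1 - q)"
    using \<open>0 \<le> q\<close> \<open>q < 1\<close> by (intro suminf_geometric) simp
  finally show ?thesis .
qed

lemma emeasure_Pi_pmf_le_exp_sum:
  fixes f :: "'a \<Rightarrow> real"
  assumes "finite I" "\<And>x. x \<in> A \<Longrightarrow> T \<le> (\<Sum>i\<in>I. f (x i))"
  shows "emeasure (measure_pmf (Pi_pmf I d p)) A
           \<le> ennreal (exp (- T)) * (\<Prod>i\<in>I. \<integral>\<^sup>+k. ennreal (exp (f k)) \<partial>measure_pmf (p i))"
proof -
  have "emeasure (measure_pmf (Pi_pmf I d p)) A = (\<integral>\<^sup>+x. indicator A x \<partial>measure_pmf (Pi_pmf I d p))"
    by simp
  also have "\<dots> \<le> (\<integral>\<^sup>+x. ennreal (exp (- T)) * (\<Prod>i\<in>I. ennreal (exp (f (x i)))) \<partial>measure_pmf (Pi_pmf I d p))"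
  proof (intro nn_integral_mono)
    fix x
    have "indicator A x \<le> ennreal (exp ((\<Sum>i\<in>I. f (x i)) - T))"
      using assms(2)[of x] by (cases "x \<in> A") auto
    also have "exp ((\<Sum>i\<in>I. f (x i)) - T) = exp (- T) * (\<Prod>i\<in>I. exp (f (x i)))"
      using assms(1) by (simp add: exp_diff exp_sum exp_minus field_simps)
    also have "ennreal \<dots> = ennreal (exp (- T)) * (\<Prod>i\<in>I. ennreal (exp (f (x i))))"
      by (simp add: ennreal_mult' prod_ennreal)
    finally show "indicator A x \<le> ennreal (exp (- T)) * (\<Prod>i\<in>I. ennreal (exp (f (x i))))" .
  qed
  also have "\<dots> = ennreal (exp (- T)) * (\<integral>\<^sup>+x. (\<Prod>i\<in>I. ennreal (exp (f (x i)))) \<partial>measure_pmf (Pi_pmf I d p))"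
    by (rule nn_integral_cmult) simp
  also have "(\<integral>\<^sup>+x. (\<Prod>i\<in>I. ennreal (exp (f (x i)))) \<partial>measure_pmf (Pi_pmf I d p))
      = (\<Prod>i\<in>I. \<integral>\<^sup>+k. ennreal (exp (f k)) \<partial>measure_pmf (p i))"
    by (rule nn_integral_prod_Pi_pmf[OF assms(1)])
  finally show ?thesis .
qed

lemma pois_prod_tail_ge_pmf_power:
  assumes "n \<le> k ^ m"
  shows "(\<Prod>i<m. pmf (poisson_pmf (lam i)) k) \<le> pois_prod_tail m lam n"
proof -
  define x where "x i = (if i < m then k else 0)" for i
  have "(\<Prod>i<m. pmf (poisson_pmf (lam i)) k) = pmf (Pi_pmf {..<m} 0 (\<lambda>i. poisson_pmf (lam i))) x"
    by (subst pmf_Pi') (auto simp: x_def)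
  also have "\<dots> \<le> pois_prod_tail m lam n"
    unfolding pois_prod_tail_def measure_pmf_single[symmetric] using assms
    by (intro measure_pmf.finite_measure_mono) (auto simp: x_def)
  finally show ?thesis .
qed

lemma ln_pois_prod_tail_ge_sum:
  fixes m n k :: nat and lam :: "nat \<Rightarrow> real"
  assumes "n \<le> k ^ m" "\<And>i. i < m \<Longrightarrow> 0 < lam i"
  shows "0 < pois_prod_tail m lam n"
    and "k * (\<Sum>i<m. ln (lam i)) - m * (k * ln k) - (\<Sum>i<m. lam i) \<le> ln (pois_prod_tail m lam n)"
proof -
  define P where "P = (\<Prod>i<m. pmf (poisson_pmf (lam i)) k)"
  have "P \<le> pois_prod_tail m lam n"
    unfolding P_def using assms(1) by (rule pois_prod_tail_ge_pmf_power)
  have pos: "0 < pmf (poisson_pmf (lam i)) k" if "i < m" for i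
    using assms(2)[OF that] by (simp add: pmf_poisson)
  then have "0 < P"
    unfolding P_def by (intro prod_pos) auto
  with \<open>P \<le> pois_prod_tail m lam n\<close> show "0 < pois_prod_tail m lam n"
    by linarith
  have "k * (\<Sum>i<m. ln (lam i)) - m * (k * ln k) - (\<Sum>i<m. lam i)
      = (\<Sum>i<m. k * ln (lam i) - k * ln k - lam i)"
    by (simp add: sum_subtractf sum_distrib_left)
  also have "\<dots> \<le> (\<Sum>i<m. ln (pmf (poisson_pmf (lam i)) k))"
    using ln_poisson_pmf_ge assms(2) by (intro sum_mono) auto
  also have "\<dots> = ln P"
    unfolding P_def using pos by (subst ln_prod) (auto simp: less_imp_neq[symmetric])
  also have "\<dots> \<le> ln (pois_prod_tail m lam n)"
    using \<open>0 < P\<close> \<open>P \<le> pois_prod_tail m lam n\<close> by simp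
  finally show "k * (\<Sum>i<m. ln (lam i)) - m * (k * ln k) - (\<Sum>i<m. lam i) \<le> ln (pois_prod_tail m lam n)" .
qed

lemma ln_pois_prod_tail_ge:
  fixes m n :: nat and lam :: "nat \<Rightarrow> real"
  assumes "1 \<le> m" "1 \<le> n" "\<And>i. i < m \<Longrightarrow> 0 < lam i"
  shows "0 < pois_prod_tail m lam n"
    and "- (2 * (\<Sum>i<m. \<bar>ln (lam i)\<bar>) + 2 * real m + (\<Sum>i<m. lam i)) * real n powr (1 / m)
           \<le> ln (pois_prod_tail m lam n) + real n powr (1 / m) * ln n"
proof -
  define N where "N = real n powr (1 / m)"
  define k where "k = nat \<lceil>N\<rceil>"
  define S where "S = (\<Sum>i<m. \<bar>ln (lam i)\<bar>)"
  define L where "L = (\<Sum>i<m. lam i)"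
  have N: "1 \<le> N" "real m * ln N = ln n" "real n = N ^ m"
    using assms by (auto simp: N_def ln_powr ge_one_powr_ge_zero powr_powr simp flip: powr_realpow)
  have k: "N \<le> k" "k \<le> 2 * N"
    using N(1) unfolding k_def by linarith+
  have "real n \<le> real k ^ m"
    unfolding N(3) using k N by (intro power_mono) auto
  then have "n \<le> k ^ m"
    by (simp flip: of_nat_power)
  then show "0 < pois_prod_tail m lam n"
    using ln_pois_prod_tail_ge_sum(1) assms(3) by blast
  have "- (2 * N) * S \<le> k * (\<Sum>i<m. ln (lam i))"
  proof -
    have "(\<Sum>i<m. - \<bar>ln (lam i)\<bar>) \<le> (\<Sum>i<m. ln (lam i))"
      by (intro sum_mono) linarith
    then have "k * - S \<le> k * (\<Sum>i<m. ln (lam i))"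
      unfolding S_def by (intro mult_left_mono) (auto simp: sum_negf)
    moreover have "k * S \<le> 2 * N * S"
      using k unfolding S_def by (intro mult_right_mono sum_nonneg) auto
    ultimately show ?thesis
      by linarith
  qed
  moreover have "real m * (k * ln k) \<le> N * ln n + 2 * real m * N"
    using mult_left_mono[OF ceiling_mult_ln_le[OF N(1)], of "real m"] N(2) unfolding k_def
    by (simp add: algebra_simps)
  moreover have "L * 1 \<le> L * N"
    using N(1) assms(3) unfolding L_def by (intro mult_left_mono sum_nonneg) (auto intro: less_imp_le)
  moreover have "k * (\<Sum>i<m. ln (lam i)) - m * (k * ln k) - L \<le> ln (pois_prod_tail m lam n)"
    unfolding L_def using ln_pois_prod_tail_ge_sum(2) \<open>n \<le> k ^ m\<close> assms(3) by blast
  moreover have "- (2 * S + 2 * real m + L) * N = - (2 * N) * S - 2 * real m * N - L * N"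
    by (simp add: algebra_simps)
  ultimately show "- (2 * (\<Sum>i<m. \<bar>ln (lam i)\<bar>) + 2 * real m + (\<Sum>i<m. lam i)) * real n powr (1 / m)
      \<le> ln (pois_prod_tail m lam n) + real n powr (1 / m) * ln n"
    unfolding N_def[symmetric] S_def[symmetric] L_def[symmetric] by linarith
qed

lemma sum_mult_ln_ge_of_prod_ge:
  fixes m n :: nat and x :: "nat \<Rightarrow> nat" and a :: real
  assumes "1 \<le> m" "1 \<le> n" "n \<le> (\<Prod>i<m. x i)" "a - 1 \<le> ln (real n powr (1 / m))"
  shows "real n powr (1 / m) * ln n - a * m * real n powr (1 / m) \<le> (\<Sum>i<m. x i * ln (x i) - a * x i)"
proof -
  define N where "N = real n powr (1 / m)"
  have N: "0 < N" "real m * ln N = ln n"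
    using assms by (auto simp: N_def ln_powr)
  have "(\<Prod>i<m. x i) \<noteq> 0"
    using assms(2,3) by linarith
  then have pos: "0 < real (x i)" if "i < m" for i
    using that by (simp add: prod_zero_iff)
  have "real n \<le> (\<Prod>i<m. real (x i))"
    using assms(3) by (metis of_nat_le_iff of_nat_prod)
  then have "real m * ln N \<le> ln (\<Prod>i<m. real (x i))"
    using assms(2) N(2) by simp
  also have "\<dots> = (\<Sum>i<m. ln (real (x i)))"
    using pos by (subst ln_prod) auto
  finally have "real (card {..<m}) * (N * ln N - a * N) \<le> (\<Sum>i<m. x i * ln (x i) - a * x i)"
    using pos N assms(4) unfolding N_def by (intro sum_mult_ln_ge_of_sum_ln_ge) auto
  then show ?thesis
    using N(2) unfolding N_def[symmetric] by (simp add: algebra_simps)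
qed

lemma pois_prod_tail_le:
  fixes m n :: nat and lam :: "nat \<Rightarrow> real" and a :: real
  assumes "1 \<le> m" "1 \<le> n" "\<And>i. i < m \<Longrightarrow> 0 < lam i" "\<And>i. i < m \<Longrightarrow> ln (lam i) + 2 \<le> a"
    and "a - 1 \<le> ln (real n powr (1 / m))"
  shows "pois_prod_tail m lam n
           \<le> exp (a * m * real n powr (1 / m) - real n powr (1 / m) * ln n) / (1 - exp (- 1)) ^ m"
proof -
  define N where "N = real n powr (1 / m)"
  define f where "f k = real k * ln k - a * k" for k :: nat
  have exponent: "N * ln n - a * m * N \<le> (\<Sum>i<m. f (x i))" if "n \<le> (\<Prod>i<m. x i)" for x
    unfolding f_def N_def using sum_mult_ln_ge_of_prod_ge[OF assms(1,2) that assms(5)] .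
  have factor: "(\<integral>\<^sup>+k. ennreal (exp (f k)) \<partial>measure_pmf (poisson_pmf (lam i))) \<le> ennreal (1 / (1 - exp (- 1)))"
    if "i < m" for i
  proof -
    have "lam i * exp (1 - a) = exp (ln (lam i) + 1 - a)"
      using assms(3) that by (simp add: exp_add exp_diff)
    also have "\<dots> \<le> exp (- 1)"
      using assms(4)[OF that] by simp
    finally show ?thesis
      unfolding f_def using assms(3) that by (intro nn_integral_poisson_exp_mult_ln_le) auto
  qed
  have "ennreal (pois_prod_tail m lam n)
      = emeasure (measure_pmf (Pi_pmf {..<m} 0 (\<lambda>i. poisson_pmf (lam i)))) {x. n \<le> (\<Prod>i<m. x i)}"
    by (simp add: pois_prod_tail_def measure_pmf.emeasure_eq_measure)
  also have "\<dots> \<le> ennreal (exp (- (N * ln n - a * m * N)))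
      * (\<Prod>i<m. \<integral>\<^sup>+k. ennreal (exp (f k)) \<partial>measure_pmf (poisson_pmf (lam i)))"
    using exponent by (intro emeasure_Pi_pmf_le_exp_sum) auto
  also have "\<dots> \<le> ennreal (exp (- (N * ln n - a * m * N))) * (\<Prod>i<m. ennreal (1 / (1 - exp (- 1))))"
    using factor by (intro mult_left_mono prod_mono_ennreal) auto
  also have "\<dots> = ennreal (exp (a * m * N - N * ln n) / (1 - exp (- 1)) ^ m)"
    by (simp add: ennreal_power ennreal_mult'[symmetric] power_one_over)
  finally show ?thesis
    unfolding N_def by (subst (asm) ennreal_le_iff) auto
qed

lemma ln_pois_prod_tail_le:
  fixes m n :: nat and lam :: "nat \<Rightarrow> real" and a :: real
  assumes "1 \<le> m" "1 \<le> n" "\<And>i. i < m \<Longrightarrow> 0 < lam i" "\<And>i. i < m \<Longrightarrow> ln (lam i) + 2 \<le> a"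
    and "a - 1 \<le> ln (real n powr (1 / m))"
  shows "ln (pois_prod_tail m lam n) + real n powr (1 / m) * ln n
           \<le> (a - ln (1 - exp (- 1))) * m * real n powr (1 / m)"
proof -
  define N where "N = real n powr (1 / m)"
  define K where "K = 1 - exp (- 1 :: real)"
  have K: "0 < K" "ln K \<le> 0"
    by (auto simp: K_def)
  have "1 \<le> N"
    using assms(2) by (simp add: N_def ge_one_powr_ge_zero)
  have "ln (pois_prod_tail m lam n) \<le> ln (exp (a * m * N - N * ln n) / K ^ m)"
    using pois_prod_tail_le[OF assms] ln_pois_prod_tail_ge(1)[OF assms(1-3)] K
    unfolding N_def K_def by simp
  also have "\<dots> = a * m * N - N * ln n - m * ln K"
    using K by (simp add: ln_div ln_realpow)
  also have "\<dots> \<le> a * m * N - N * ln n - m * ln K * N"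
    using K \<open>1 \<le> N\<close> mult_left_mono[of 1 N "- m * ln K"] by (simp add: mult_nonneg_nonpos)
  finally show ?thesis
    unfolding N_def[symmetric] K_def[symmetric] by (simp add: algebra_simps)
qed

lemma ln_pois_prod_tail_bigo:
  fixes m :: nat and lam :: "nat \<Rightarrow> real"
  assumes "1 \<le> m" "\<And>i. i < m \<Longrightarrow> 0 < lam i"
  shows "(\<lambda>n. ln (pois_prod_tail m lam n) + real n powr (1 / m) * ln n) \<in> O(\<lambda>n. real n powr (1 / m))"
proof (rule bigoI)
  define S where "S = (\<Sum>i<m. \<bar>ln (lam i)\<bar>)"
  define a where "a = S + 2"
  define C where "C = max (2 * S + 2 * real m + (\<Sum>i<m. lam i)) ((a - ln (1 - exp (- 1))) * m)"
  have a: "ln (lam i) + 2 \<le> a" if "i < m" for i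
    using member_le_sum[of i "{..<m}" "\<lambda>i. \<bar>ln (lam i)\<bar>"] that unfolding a_def S_def by auto
  have "filterlim (\<lambda>n::nat. ln (real n powr (1 / m))) at_top at_top"
    using assms(1) by real_asymp
  then have "\<forall>\<^sub>F n in at_top. a - 1 \<le> ln (real n powr (1 / m))"
    by (simp add: filterlim_at_top)
  with eventually_ge_at_top[of 1]
  show "\<forall>\<^sub>F n in at_top. norm (ln (pois_prod_tail m lam n) + real n powr (1 / m) * ln n)
          \<le> C * norm (real n powr (1 / m))"
  proof eventually_elim
    case (elim n)
    define N where "N = real n powr (1 / m)"
    have lower: "- ((2 * S + 2 * real m + (\<Sum>i<m. lam i)) * N) \<le> ln (pois_prod_tail m lam n) + N * ln n"
      unfolding S_def N_def using ln_pois_prod_tail_ge(2)[of m n lam] assms elim(1) by (metis minus_mult_left)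
    have upper: "ln (pois_prod_tail m lam n) + N * ln n \<le> (a - ln (1 - exp (- 1))) * m * N"
      unfolding N_def using ln_pois_prod_tail_le[of m n lam a] assms elim a by blast
    have "(2 * S + 2 * real m + (\<Sum>i<m. lam i)) * N \<le> C * N" "(a - ln (1 - exp (- 1))) * m * N \<le> C * N"
      unfolding C_def N_def by (intro mult_right_mono; simp)+
    with lower upper have "\<bar>ln (pois_prod_tail m lam n) + N * ln n\<bar> \<le> C * N"
      by linarith
    then show ?case
      unfolding N_def by simp
  qed
qed

theorem theorem4:
  fixes m :: nat and lam :: "nat \<Rightarrow> real"
  assumes "m \<ge> 2"
    and "\<And>i. i < m \<Longrightarrow> lam i > 0"
  shows "(\<exists>e. e \<in> O(\<lambda>n::nat. real n powr (1 / real m)) \<and>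
            (\<forall>\<^sub>F n in at_top.
               pois_prod_tail m lam n =
                 (2 * pi) powr ((real m - 1) / 2) * real n powr ((real m - 1) / (2 * real m))
                 * exp (- (real n powr (1 / real m)) * ln (real n) + e n)))
       \<and> (\<lambda>n::nat. ln (pois_prod_tail m lam n) + real n powr (1 / real m) * ln (real n))
           \<in> O(\<lambda>n::nat. real n powr (1 / real m))"
proof -
  have "1 \<le> m"
    using assms(1) by simp
  define c where "c = (2 * pi) powr ((real m - 1) / 2)"
  define \<beta> where "\<beta> = (real m - 1) / (2 * real m)"
  define g where "g n = ln (pois_prod_tail m lam n) + real n powr (1 / real m) * ln (real n)" for n :: nat
  define e where "e n = g n - (ln c + \<beta> * ln (real n))" for n :: nat
  have g: "g \<in> O(\<lambda>n. real n powr (1 / real m))"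
    unfolding g_def using ln_pois_prod_tail_bigo[OF \<open>1 \<le> m\<close> assms(2)] .
  moreover have "(\<lambda>n::nat. ln c + \<beta> * ln (real n)) \<in> O(\<lambda>n. real n powr (1 / real m))"
    using \<open>1 \<le> m\<close> by real_asymp
  ultimately have "e \<in> O(\<lambda>n. real n powr (1 / real m))"
    unfolding e_def by (rule sum_in_bigo)
  moreover have "\<forall>\<^sub>F n in at_top. pois_prod_tail m lam n
      = c * real n powr \<beta> * exp (- (real n powr (1 / real m)) * ln (real n) + e n)"
    using eventually_ge_at_top[of 1]
  proof eventually_elim
    case (elim n)
    have "0 < pois_prod_tail m lam n"
      using ln_pois_prod_tail_ge(1)[of m n lam] \<open>1 \<le> m\<close> elim assms(2) by blast
    moreover have "0 < c"
      by (simp add: c_def)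
    ultimately show ?case
      using elim by (simp add: e_def g_def exp_diff exp_add exp_minus powr_def)
  qed
  ultimately show ?thesis
    using g unfolding c_def \<beta>_def g_def by blast
qed

end
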